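(* Let $(X,\sigma)$ be a Toeplitz subshift with period structure $(p_n)$. Then $\operatorname{Aut}^{(\infty)}(X,\sigma)$ is the direct limit of the sequence $$\operatorname{Aut}(X,\sigma)\hookrightarrow\operatorname{Aut}(X,\sigma^{p_1})\hookrightarrow\operatorname{Aut}(X,\sigma^{p_2})\hookrightarrow\operatorname{Aut}(X,\sigma^{p_3})\hookrightarrow\cdots$$ where the maps are the natural inclusions; equivalently $\operatorname{Aut}^{(\infty)}(X,\sigma)=\operatorname{Aut}(X,\sigma)\cup\bigcup_{n\ge1}\operatorname{Aut}(X,\sigma^{p_n})$ inside $\operatorname{Homeo}(X)$.
   Context: Let $\mathcal{A}$ be a finite alphabet and $\sigma$ the left shift on $\mathcal{A}^{\mathbb{Z}}$. A Toeplitz sequence $u$ is one such that for every $n\in\mathbb{Z}$ there is $m\ge1$ with $u_n=u_{n+km}$ for all $k$; it is assumed non-periodic. With $\operatorname{per}_p(u)=\{k: u_k=u_{k+pm}\ \forall m\}$, a period structure is a sequence $(p_n)$ with $p_n\mid p_{n+1}$, $\bigcup_n\operatorname{per}_{p_n}(u)=\mathbb{Z}$, each $p_n$ essential. The Toeplitz subshift $(X,\sigma)$ is the orbit closure of $u$ with the shift. $\operatorname{Aut}(X,T)$ is the group of homeomorphisms commuting with $T$ and $\operatorname{Aut}^{(\infty)}(X,T)=\bigcup_{n\ge1}\operatorname{Aut}(X,T^n)\subseteq\operatorname{Homeo}(X)$. *)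

theory Defs
  imports "HOL-Analysis.Analysis"
begin

definition fullshift_top :: "(int \<Rightarrow> 'a) topology" where
  "fullshift_top = product_topology (\<lambda>_. discrete_topology UNIV) UNIV"

definition shift :: "(int \<Rightarrow> 'a) \<Rightarrow> (int \<Rightarrow> 'a)" where
  "shift x = (\<lambda>k. x (k + 1))"

definition toeplitz :: "(int \<Rightarrow> 'a) \<Rightarrow> bool" where
  "toeplitz u \<longleftrightarrow> (\<forall>n. \<exists>m::int. m \<ge> 1 \<and> (\<forall>k::int. u n = u (n + k * m)))"

definition periodic_seq :: "(int \<Rightarrow> 'a) \<Rightarrow> bool" where
  "periodic_seq u \<longleftrightarrow> (\<exists>q::int. q \<ge> 1 \<and> (\<forall>n. u (n + q) = u n))"

definition per :: "nat \<Rightarrow> (int \<Rightarrow> 'a) \<Rightarrow> int set" where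
  "per p u = {k. \<forall>m::int. u k = u (k + int p * m)}"

definition skeleton :: "nat \<Rightarrow> (int \<Rightarrow> 'a) \<Rightarrow> int \<Rightarrow> 'a option" where
  "skeleton p u k = (if k \<in> per p u then Some (u k) else None)"

definition essential_period :: "nat \<Rightarrow> (int \<Rightarrow> 'a) \<Rightarrow> bool" where
  "essential_period p u \<longleftrightarrow> p \<ge> 1 \<and> per p u \<noteq> {} \<and>
     (\<forall>q. 1 \<le> q \<and> q < p \<longrightarrow> (\<exists>k. skeleton p u (k + int q) \<noteq> skeleton p u k))"

definition period_structure :: "(nat \<Rightarrow> nat) \<Rightarrow> (int \<Rightarrow> 'a) \<Rightarrow> bool" where
  "period_structure p u \<longleftrightarrow>
     (\<forall>n. p n dvd p (Suc n)) \<and> (\<Union>n. per (p n) u) = UNIV \<and>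
     (\<forall>n. essential_period (p n) u)"

definition orbit_closure :: "(int \<Rightarrow> 'a) \<Rightarrow> (int \<Rightarrow> 'a) set" where
  "orbit_closure u = fullshift_top closure_of {(\<lambda>j. u (j + k)) | k::int. True}"

definition Aut :: "(int \<Rightarrow> 'a) set \<Rightarrow> ((int \<Rightarrow> 'a) \<Rightarrow> (int \<Rightarrow> 'a))
                  \<Rightarrow> ((int \<Rightarrow> 'a) \<Rightarrow> (int \<Rightarrow> 'a)) set" where
  "Aut X T = {f. homeomorphic_map (subtopology fullshift_top X) (subtopology fullshift_top X) f
                 \<and> (\<forall>x\<in>X. f (T x) = T (f x))}"

definition Aut_infty :: "(int \<Rightarrow> 'a) set \<Rightarrow> ((int \<Rightarrow> 'a) \<Rightarrow> (int \<Rightarrow> 'a))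
                  \<Rightarrow> ((int \<Rightarrow> 'a) \<Rightarrow> (int \<Rightarrow> 'a)) set" where
  "Aut_infty X T = (\<Union>n\<in>{1..}. Aut X (T ^^ n))"

end

theory Submission
  imports Defs
begin

text \<open>
  Write X for the orbit closure of u. A point x of X has phase r at level n if arbitrarily
  large central windows of x occur in u at positions congruent to r modulo p n. Such a phase
  exists by pigeonhole, it is unique modulo p n because p n is an essential period, and the
  phases at all levels determine the points of the orbit of u.

  Let f commute with \<sigma>^k. Since gcd k (p N) is eventually constant, P = p n0 is congruent
  to a multiple of k modulo every p N with N \<ge> n0. By continuity, f \<sigma>^P and \<sigma>^P f then
  move phases in the same way; composing with the inverse of f turns this into
  f \<sigma>^P = \<sigma>^P f on the orbit of u, and density extends it to X.
\<close>

section \<open>Shifts, windows and the product topology\<close>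

definition shift_by :: "int \<Rightarrow> (int \<Rightarrow> 'a) \<Rightarrow> int \<Rightarrow> 'a" where
  "shift_by t x = (\<lambda>j. x (j + t))"

lemma shift_by_apply [simp]: "shift_by t x j = x (j + t)"
  by (simp add: shift_by_def)

lemma shift_by_shift_by [simp]: "shift_by s (shift_by t x) = shift_by (s + t) x"
  by (simp add: shift_by_def ac_simps)

lemma shift_by_0 [simp]: "shift_by 0 x = x"
  by (simp add: shift_by_def)

lemma funpow_shift: "shift ^^ k = shift_by (int k)"
proof (induction k)
  case (Suc k)
  then show ?case by (auto simp: shift_def shift_by_def fun_eq_iff ac_simps)
qed (simp add: shift_by_def fun_eq_iff)

definition agree_within :: "int \<Rightarrow> (int \<Rightarrow> 'a) \<Rightarrow> (int \<Rightarrow> 'a) \<Rightarrow> bool" where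
  "agree_within L x y \<longleftrightarrow> (\<forall>i. \<bar>i\<bar> \<le> L \<longrightarrow> x i = y i)"

lemma agree_within_mono: "agree_within L x y \<Longrightarrow> L' \<le> L \<Longrightarrow> agree_within L' x y"
  by (simp add: agree_within_def)

lemma agree_within_commute: "agree_within L x y \<longleftrightarrow> agree_within L y x"
  by (auto simp: agree_within_def)

lemma agree_within_shift_by: "agree_within (L + \<bar>s\<bar>) x y \<Longrightarrow> agree_within L (shift_by s x) (shift_by s y)"
  by (simp add: agree_within_def)

lemma topspace_fullshift_top [simp]: "topspace fullshift_top = UNIV"
  by (simp add: fullshift_top_def)

lemma Hausdorff_space_fullshift_top: "Hausdorff_space fullshift_top"
  by (simp add: fullshift_top_def Hausdorff_space_product_topology)

lemma continuous_map_shift_by: "continuous_map fullshift_top fullshift_top (shift_by s)"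
  unfolding fullshift_top_def continuous_map_componentwise_UNIV shift_by_def
  by (auto intro: continuous_map_product_projection)

lemma openin_agree_within: "openin fullshift_top {y. agree_within L x y}"
proof -
  have window: "{y. agree_within L x y} = (\<Pi>\<^sub>E i\<in>UNIV. if \<bar>i\<bar> \<le> L then {x i} else UNIV)"
    by (auto simp: agree_within_def PiE_iff split: if_splits)
  have "finite {i::int. \<bar>i\<bar> \<le> L}"
    by (rule finite_subset[of _ "{-L..L}"]) auto
  then show ?thesis
    unfolding window fullshift_top_def openin_PiE_gen by (auto elim: rev_finite_subset)
qed

lemma openin_fullshift_top_agree_within:
  assumes "openin fullshift_top T" "x \<in> T"
  obtains R where "\<And>y. agree_within R x y \<Longrightarrow> y \<in> T"
proof -
  obtain U where U: "finite {i. U i \<noteq> UNIV}" "x \<in> Pi\<^sub>E UNIV U" "Pi\<^sub>E UNIV U \<subseteq> T"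
    using assms unfolding fullshift_top_def openin_product_topology_alt by auto
  define R where "R = (\<Sum>i | U i \<noteq> UNIV. \<bar>i\<bar>)"
  have "y \<in> T" if "agree_within R x y" for y
  proof -
    have bound: "\<bar>i\<bar> \<le> R" if "U i \<noteq> UNIV" for i
      unfolding R_def using U(1) that by (intro member_le_sum) auto
    have "y i \<in> U i" for i
    proof (cases "U i = UNIV")
      case False
      then have "y i = x i"
        using \<open>agree_within R x y\<close> bound by (simp add: agree_within_def)
      then show ?thesis
        using U(2) by (auto simp: PiE_iff)
    qed simp
    then have "y \<in> Pi\<^sub>E UNIV U"
      by (simp add: PiE_iff)
    then show ?thesis
      using U(3) by blast
  qed
  then show thesis
    by (rule that)
qed

lemma orbit_closure_eq: "orbit_closure u = fullshift_top closure_of range (\<lambda>t. shift_by t u)"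
  by (simp add: orbit_closure_def shift_by_def full_SetCompr_eq)

lemma mem_orbit_closure_iff:
  "x \<in> orbit_closure u \<longleftrightarrow> (\<forall>L. \<exists>t. agree_within L (shift_by t u) x)"
proof
  assume x: "x \<in> orbit_closure u"
  show "\<forall>L. \<exists>t. agree_within L (shift_by t u) x"
  proof
    fix L
    have "x \<in> {y. agree_within L x y}"
      by (simp add: agree_within_def)
    then obtain t where "shift_by t u \<in> {y. agree_within L x y}"
      using x openin_agree_within[of L x] unfolding orbit_closure_eq in_closure_of by blast
    then show "\<exists>t. agree_within L (shift_by t u) x"
      by (auto simp: agree_within_def)
  qed
next
  assume windows: "\<forall>L. \<exists>t. agree_within L (shift_by t u) x"
  show "x \<in> orbit_closure u"
    unfolding orbit_closure_eq in_closure_of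
  proof (intro conjI allI impI)
    fix T
    assume "x \<in> T \<and> openin fullshift_top T"
    then obtain R where R: "\<And>y. agree_within R x y \<Longrightarrow> y \<in> T"
      using openin_fullshift_top_agree_within by metis
    obtain t where "agree_within R (shift_by t u) x"
      using windows by blast
    then have "shift_by t u \<in> T"
      by (intro R) (simp add: agree_within_def)
    then show "\<exists>y. y \<in> range (\<lambda>t. shift_by t u) \<and> y \<in> T"
      by blast
  qed simp
qed

lemma shift_by_mem_orbit_closure [simp]: "shift_by t u \<in> orbit_closure u"
  unfolding mem_orbit_closure_iff by (metis add_0 shift_by_shift_by agree_within_def)

lemma shift_by_mem_orbit_closureI: "x \<in> orbit_closure u \<Longrightarrow> shift_by s x \<in> orbit_closure u"
  unfolding mem_orbit_closure_iff by (metis agree_within_shift_by shift_by_shift_by)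

lemma continuous_map_agree_within:
  assumes F: "continuous_map (subtopology fullshift_top X) fullshift_top F" and "x \<in> X"
  obtains R where "\<And>y. y \<in> X \<Longrightarrow> agree_within R x y \<Longrightarrow> agree_within L (F x) (F y)"
proof -
  have "openin (subtopology fullshift_top X) {y \<in> X. F y \<in> {z. agree_within L (F x) z}}"
    using openin_continuous_map_preimage[OF F openin_agree_within] by simp
  then obtain T where T: "openin fullshift_top T" "{y \<in> X. agree_within L (F x) (F y)} = T \<inter> X"
    by (auto simp: openin_subtopology)
  moreover have "x \<in> T"
    using T(2) \<open>x \<in> X\<close> by (auto simp: agree_within_def)
  ultimately obtain R where "\<And>y. agree_within R x y \<Longrightarrow> y \<in> T"
    using openin_fullshift_top_agree_within by metis
  then show thesis
    using T(2) that by blast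
qed

lemma commutes_shift_by_on_orbit_closure:
  assumes f: "continuous_map (subtopology fullshift_top (orbit_closure u)) fullshift_top f"
    and orbit: "\<And>t. f (shift_by (d + t) u) = shift_by d (f (shift_by t u))"
    and x: "x \<in> orbit_closure u"
  shows "f (shift_by d x) = shift_by d (f x)"
proof -
  let ?T = "subtopology fullshift_top (orbit_closure u)"
  have "orbit_closure u \<inter> range (\<lambda>t. shift_by t u) = range (\<lambda>t. shift_by t u)"
    by auto
  then have dense: "x \<in> ?T closure_of range (\<lambda>t. shift_by t u)"
    unfolding closure_of_subtopology using x by (simp add: orbit_closure_eq)
  have "continuous_map ?T ?T (shift_by d)"
    by (simp add: continuous_map_in_subtopology continuous_map_from_subtopology continuous_map_shift_by
        shift_by_mem_orbit_closureI)
  then have "continuous_map ?T fullshift_top (\<lambda>x. f (shift_by d x))"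
    using continuous_map_compose[OF _ f] by (simp add: comp_def)
  moreover have "continuous_map ?T fullshift_top (\<lambda>x. shift_by d (f x))"
    using continuous_map_compose[OF f continuous_map_shift_by] by (simp add: comp_def)
  moreover have "f (shift_by d y) = shift_by d (f y)" if "y \<in> range (\<lambda>t. shift_by t u)" for y
    using that orbit by auto
  ultimately show ?thesis
    by (rule forall_in_closure_of_eq[where f = "\<lambda>x. f (shift_by d x)" and g = "\<lambda>x. shift_by d (f x)",
          OF dense Hausdorff_space_fullshift_top])
qed

section \<open>Phases with respect to a period structure\<close>

lemma per_dvd_diff:
  assumes "j \<in> per q u" "int q dvd j' - j"
  shows "u j' = u j" and "j' \<in> per q u"
proof -
  obtain c where j': "j' = j + int q * c"
    using assms(2) by (metis add.commute diff_add_cancel dvdE)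
  have periodic: "u (j + int q * m) = u j" for m
    using assms(1) by (simp add: per_def)
  then show "u j' = u j"
    by (simp add: j')
  show "j' \<in> per q u"
    unfolding per_def
  proof (intro CollectI allI)
    fix m
    have "j' + int q * m = j + int q * (c + m)"
      by (simp add: j' algebra_simps)
    then show "u j' = u (j' + int q * m)"
      using periodic \<open>u j' = u j\<close> by metis
  qed
qed

lemma skeleton_add_mult: "skeleton q u (j + int q * c) = skeleton q u j"
proof (cases "j \<in> per q u")
  case True
  then show ?thesis
    using per_dvd_diff[OF True, of "j + int q * c"] by (simp add: skeleton_def)
next
  case False
  then have "j + int q * c \<notin> per q u"
    using per_dvd_diff(2)[of "j + int q * c" q u j] by (auto simp: dvd_diff_commute)
  then show ?thesis
    using False by (simp add: skeleton_def)
qed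

lemma agree_within_shift_by_per:
  assumes "{c - R..c + R} \<subseteq> per q u" "int q dvd c' - c"
  shows "agree_within R (shift_by c u) (shift_by c' u)"
  unfolding agree_within_def
proof (intro allI impI)
  fix i :: int
  assume "\<bar>i\<bar> \<le> R"
  then have "i + c \<in> per q u"
    using assms(1) by (auto simp: abs_le_iff)
  moreover have "int q dvd (i + c') - (i + c)"
    using assms(2) by simp
  ultimately have "u (i + c') = u (i + c)"
    by (rule per_dvd_diff(1))
  then show "shift_by c u i = shift_by c' u i"
    by simp
qed

lemma essential_period_dvd:
  assumes "essential_period q u" and periodic: "\<And>j. skeleton q u (j + s) = skeleton q u j"
  shows "int q dvd s"
proof (rule ccontr)
  assume "\<not> int q dvd s"
  then have q: "0 < s mod int q" "s mod int q < int q"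
    using assms(1) by (auto simp: essential_period_def dvd_eq_mod_eq_0 order_le_neq_trans)
  have "skeleton q u (j + s mod int q) = skeleton q u j" for j
  proof -
    have "j + s mod int q = (j + s) + int q * - (s div int q)"
      by (simp add: algebra_simps minus_div_mult_eq_mod [symmetric])
    then show ?thesis
      by (metis skeleton_add_mult periodic)
  qed
  moreover have "1 \<le> nat (s mod int q) \<and> nat (s mod int q) < q"
    using q by linarith
  ultimately show False
    using assms(1) q unfolding essential_period_def by (metis int_nat_eq less_le_not_le)
qed

locale toeplitz_with_periods =
  fixes u :: "int \<Rightarrow> 'a" and p :: "nat \<Rightarrow> nat"
  assumes period_structure: "period_structure p u"
begin

abbreviation X :: "(int \<Rightarrow> 'a) set" where
  "X \<equiv> orbit_closure u"

lemma p_pos: "0 < p n"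
  using period_structure by (auto simp: period_structure_def essential_period_def Suc_le_eq)

lemma p_dvd:
  assumes "n \<le> m"
  shows "int (p n) dvd int (p m)"
proof -
  have "p n dvd p m"
    using assms
  proof (induction m rule: dec_induct)
    case (step m)
    then show ?case
      using period_structure unfolding period_structure_def by (metis dvd_trans)
  qed simp
  then show ?thesis
    by simp
qed

lemma per_mono:
  assumes "n \<le> m"
  shows "per (p n) u \<subseteq> per (p m) u"
proof
  fix j
  assume j: "j \<in> per (p n) u"
  have "u (j + int (p m) * c) = u j" for c
    by (rule per_dvd_diff(1)[OF j]) (simp add: dvd_mult2[OF p_dvd[OF assms]])
  then show "j \<in> per (p m) u"
    by (simp add: per_def)
qed

lemma eventually_subset_per:
  assumes "finite A"
  shows "eventually (\<lambda>n. A \<subseteq> per (p n) u) sequentially"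
proof -
  have "eventually (\<lambda>n. a \<in> per (p n) u) sequentially" for a
  proof -
    have "a \<in> (\<Union>n. per (p n) u)"
      using period_structure by (simp add: period_structure_def)
    then obtain N where "a \<in> per (p N) u"
      by blast
    then show ?thesis
      using per_mono unfolding eventually_sequentially by blast
  qed
  then show ?thesis
    unfolding subset_eq by (intro eventually_ball_finite[OF assms]) blast
qed

text \<open>has_phase n x r says that r mod p n is the level-n coordinate of x in the odometer
  (maximal equicontinuous) factor of X.\<close>

definition has_phase :: "nat \<Rightarrow> (int \<Rightarrow> 'a) \<Rightarrow> int \<Rightarrow> bool" where
  "has_phase n x r \<longleftrightarrow> (\<forall>L. \<exists>t. int (p n) dvd t - r \<and> agree_within L (shift_by t u) x)"

lemma has_phase_exists:
  assumes "x \<in> X"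
  shows "\<exists>r. has_phase n x r"
proof (rule ccontr)
  assume "\<nexists>r. has_phase n x r"
  then obtain Lr where Lr: "\<And>r t. int (p n) dvd t - r \<Longrightarrow> \<not> agree_within (Lr r) (shift_by t u) x"
    unfolding has_phase_def by metis
  define L where "L = Max (Lr ` {0..<int (p n)})"
  obtain t where t: "agree_within L (shift_by t u) x"
    using assms by (auto simp: mem_orbit_closure_iff)
  have "t mod int (p n) \<in> {0..<int (p n)}"
    using p_pos[of n] by simp
  then have "Lr (t mod int (p n)) \<le> L"
    unfolding L_def by simp
  then have "agree_within (Lr (t mod int (p n))) (shift_by t u) x"
    using t agree_within_mono by blast
  moreover have "int (p n) dvd t - t mod int (p n)"
    by (simp add: minus_mod_eq_mult_div)
  ultimately show False
    using Lr by blast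
qed

lemma has_phase_cong: "has_phase n x r \<Longrightarrow> int (p n) dvd r' - r \<Longrightarrow> has_phase n x r'"
  unfolding has_phase_def by (metis dvd_diff diff_diff_eq2 diff_add_cancel add_diff_eq)

lemma has_phase_mono: "has_phase m x r \<Longrightarrow> n \<le> m \<Longrightarrow> has_phase n x r"
  unfolding has_phase_def using p_dvd dvd_trans by blast

lemma has_phase_shift_by:
  assumes "has_phase n x r"
  shows "has_phase n (shift_by s x) (r + s)"
  unfolding has_phase_def
proof
  fix L
  obtain t where "int (p n) dvd t - r" "agree_within (L + \<bar>s\<bar>) (shift_by t u) x"
    using assms unfolding has_phase_def by blast
  then have "int (p n) dvd (s + t) - (r + s)" "agree_within L (shift_by (s + t) u) (shift_by s x)"
    using agree_within_shift_by by fastforce+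
  then show "\<exists>t. int (p n) dvd t - (r + s) \<and> agree_within L (shift_by t u) (shift_by s x)"
    by blast
qed

lemma has_phase_orbit: "has_phase n (shift_by b u) b"
  unfolding has_phase_def agree_within_def by (intro allI exI[of _ b]) simp

lemma has_phase_agree_within:
  assumes "has_phase n y r" "agree_within L y z"
  obtains t where "int (p n) dvd t - r" "agree_within L (shift_by t u) z"
  using assms unfolding has_phase_def agree_within_def by metis

lemma has_phase_diff_preserves_per_values:
  assumes r: "has_phase n x r" and r': "has_phase n x r'" and i: "i + (r' - r) \<in> per (p n) u"
  shows "u i = u (i + (r' - r))"
proof -
  obtain N where N: "n \<le> N" "i \<in> per (p N) u"
    using eventually_conj[OF eventually_ge_at_top[of n] eventually_subset_per[of "{i}"]]
    unfolding eventually_sequentially by auto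
  define Q where "Q = int (p N)"
  obtain t where t: "int (p n) dvd t - r" "agree_within (Q + \<bar>i\<bar>) (shift_by t u) x"
    using r unfolding has_phase_def by blast
  obtain t' where t': "int (p n) dvd t' - r'" "agree_within (Q + \<bar>i\<bar>) (shift_by t' u) x"
    using r' unfolding has_phase_def by blast
  \<comment> \<open>Read x (e + i) off both occurrences, with e chosen so that t + e + i \<equiv> i (mod Q).\<close>
  define e where "e = (- t) mod Q"
  have "0 \<le> e" "e < Q"
    using p_pos[of N] by (auto simp: e_def Q_def)
  then have "\<bar>e + i\<bar> \<le> Q + \<bar>i\<bar>"
    by linarith
  then have "u (t + (e + i)) = u (t' + (e + i))"
    using t(2) t'(2) unfolding agree_within_def shift_by_apply by (metis add.commute)
  moreover have "(t + e) mod Q = 0"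
    unfolding e_def by (simp add: mod_add_right_eq)
  then have Qe: "Q dvd t + e"
    by (simp add: dvd_eq_mod_eq_0)
  then have "u (t + (e + i)) = u i"
    by (intro per_dvd_diff(1)[OF N(2)]) (simp add: Q_def add.assoc [symmetric])
  moreover have "int (p n) dvd (t' - r') + (t + e) - (t - r)"
    using t(1) t'(1) dvd_trans[OF p_dvd[OF N(1)] Qe[unfolded Q_def]] by (blast intro: dvd_add dvd_diff)
  then have "u (t' + (e + i)) = u (i + (r' - r))"
    by (intro per_dvd_diff(1)[OF i]) (simp add: algebra_simps)
  ultimately show ?thesis
    by simp
qed

lemma has_phase_diff_per_imp_per:
  assumes r: "has_phase n x r" and r': "has_phase n x r'" and j: "j + (r' - r) \<in> per (p n) u"
  shows "j \<in> per (p n) u"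
  unfolding per_def
proof (intro CollectI allI)
  fix m
  let ?s = "r' - r" and ?P = "int (p n)"
  have "j + ?P * m + ?s \<in> per (p n) u"
    by (rule per_dvd_diff(2)[OF j]) simp
  then have "u (j + ?P * m) = u (j + ?P * m + ?s)"
    by (rule has_phase_diff_preserves_per_values[OF r r'])
  also have "\<dots> = u (j + ?s + ?P * m)"
    by (simp add: ac_simps)
  also have "\<dots> = u (j + ?s)"
    by (rule per_dvd_diff(1)[OF j]) simp
  also have "\<dots> = u j"
    using has_phase_diff_preserves_per_values[OF r r' j] by simp
  finally show "u j = u (j + ?P * m)"
    by simp
qed

lemma skeleton_periodic_has_phase_diff:
  assumes r: "has_phase n x r" and r': "has_phase n x r'"
  shows "skeleton (p n) u (j + (r' - r)) = skeleton (p n) u j"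
proof -
  have "j + (r' - r) \<in> per (p n) u \<longleftrightarrow> j \<in> per (p n) u"
  proof
    show "j + (r' - r) \<in> per (p n) u \<Longrightarrow> j \<in> per (p n) u"
      by (rule has_phase_diff_per_imp_per[OF r r'])
    have "j + (r' - r) + (r - r') = j"
      by simp
    then show "j \<in> per (p n) u \<Longrightarrow> j + (r' - r) \<in> per (p n) u"
      using has_phase_diff_per_imp_per[OF r' r, of "j + (r' - r)"] by argo
  qed
  then show ?thesis
    using has_phase_diff_preserves_per_values[OF r r', of j] by (auto simp: skeleton_def)
qed

lemma has_phase_unique: "has_phase n x r \<Longrightarrow> has_phase n x r' \<Longrightarrow> int (p n) dvd r' - r"
  using period_structure essential_period_dvd skeleton_periodic_has_phase_diff
  unfolding period_structure_def by blast

definition same_phases :: "(int \<Rightarrow> 'a) \<Rightarrow> (int \<Rightarrow> 'a) \<Rightarrow> bool" where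
  "same_phases x y \<longleftrightarrow> (\<forall>n. \<exists>r. has_phase n x r \<and> has_phase n y r)"

lemma same_phases_orbit_eq:
  assumes "same_phases (shift_by b u) x"
  shows "x = shift_by b u"
proof
  fix j
  obtain n where n: "j + b \<in> per (p n) u"
    using eventually_subset_per[of "{j + b}"] unfolding eventually_sequentially by auto
  obtain r where "has_phase n (shift_by b u) r" "has_phase n x r"
    using assms unfolding same_phases_def by blast
  then have "has_phase n x b"
    using has_phase_unique has_phase_orbit has_phase_cong by blast
  then obtain t where "int (p n) dvd t - b" "agree_within \<bar>j\<bar> (shift_by t u) x"
    unfolding has_phase_def by blast
  then have "x j = u (j + t)"
    by (simp add: agree_within_def)
  also have "\<dots> = u (j + b)"
    by (rule per_dvd_diff(1)[OF n]) (simp add: \<open>int (p n) dvd t - b\<close>)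
  finally show "x j = shift_by b u j"
    by simp
qed

lemma gcd_eventually_dvd_period:
  assumes "0 < k"
  obtains n0 where "\<And>N. n0 \<le> N \<Longrightarrow> gcd k (int (p N)) dvd int (p n0)"
proof -
  define g where "g N = nat (gcd k (int (p N)))" for N
  have "g N < nat k + 1" for N
    unfolding g_def by (metis assms gcd_le1_int le_imp_less_Suc nat_mono Suc_eq_plus1)
  then obtain n0 where n0: "\<And>N. g N \<le> g n0"
    using Lattices_Big.ex_has_greatest_nat[of "\<lambda>_. True" 0 g "nat k + 1"] by blast
  show thesis
  proof (rule that)
    fix N
    assume "n0 \<le> N"
    then have "gcd k (int (p n0)) dvd gcd k (int (p N))"
      by (intro gcd_mono p_dvd) simp_all
    then have "gcd k (int (p n0)) \<le> gcd k (int (p N))"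
      using assms by (intro zdvd_imp_le) auto
    moreover have "gcd k (int (p N)) \<le> gcd k (int (p n0))"
      using n0[of N] by (simp add: g_def nat_le_eq_zle)
    ultimately show "gcd k (int (p N)) dvd int (p n0)"
      by (metis antisym gcd_dvd2)
  qed
qed

end

section \<open>Maps commuting with a power of the shift\<close>

lemma nonneg_solution_if_gcd_dvd:
  fixes k q d :: int
  assumes "0 < q" "gcd k q dvd d"
  obtains z :: nat where "q dvd d - k * int z"
proof -
  obtain e where d: "d = gcd k q * e"
    using assms(2) by blast
  obtain a b where ab: "a * k + b * q = gcd k q"
    using bezout_int by blast
  have "d - k * (a * e) = q * (b * e)"
    by (simp add: d ab [symmetric] algebra_simps)
  then have "q dvd (d - k * (a * e)) + q * (k * ((a * e) div q))"
    by simp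
  also have "(d - k * (a * e)) + q * (k * ((a * e) div q)) = d - k * ((a * e) mod q)"
    by (simp add: algebra_simps minus_mult_div_eq_mod [symmetric])
  also have "(a * e) mod q = int (nat ((a * e) mod q))"
    using assms(1) by simp
  finally show thesis
    by (rule that)
qed

locale shift_power_commuting = toeplitz_with_periods +
  fixes F :: "(int \<Rightarrow> 'a) \<Rightarrow> int \<Rightarrow> 'a" and k :: int
  assumes k_pos: "0 < k"
    and continuous: "continuous_map (subtopology fullshift_top (orbit_closure u)) fullshift_top F"
    and maps_orbit_closure: "\<And>x. x \<in> orbit_closure u \<Longrightarrow> F x \<in> orbit_closure u"
    and commutes: "\<And>x. x \<in> orbit_closure u \<Longrightarrow> F (shift_by k x) = shift_by k (F x)"
begin

lemma commutes_mult:
  assumes "x \<in> X"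
  shows "F (shift_by (k * int m) x) = shift_by (k * int m) (F x)"
proof (induction m)
  case (Suc m)
  have "F (shift_by (k * int (Suc m)) x) = F (shift_by k (shift_by (k * int m) x))"
    by (simp add: algebra_simps)
  also have "\<dots> = shift_by k (F (shift_by (k * int m) x))"
    using commutes shift_by_mem_orbit_closureI[OF assms] by blast
  also have "\<dots> = shift_by k (shift_by (k * int m) (F x))"
    by (simp only: Suc.IH)
  also have "\<dots> = shift_by (k * int (Suc m)) (F x)"
    by (simp add: algebra_simps)
  finally show ?case .
qed simp

text \<open>Modulo every large p N, d is congruent to a multiple of k, so shift_by (a + d) u is
  approximated by shifts of shift_by a u by multiples of k, which F commutes with.\<close>
lemma has_phase_image_orbit:
  assumes dvd: "\<And>N. n0 \<le> N \<Longrightarrow> gcd k (int (p N)) dvd d"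
    and r: "has_phase n (F (shift_by a u)) r"
  shows "has_phase n (F (shift_by (a + d) u)) (r + d)"
  unfolding has_phase_def
proof
  fix L
  obtain R where R: "\<And>y. y \<in> X \<Longrightarrow> agree_within R (shift_by (a + d) u) y
      \<Longrightarrow> agree_within L (F (shift_by (a + d) u)) (F y)"
    using continuous_map_agree_within[OF continuous, of "shift_by (a + d) u"] by auto
  obtain N where N: "n \<le> N" "n0 \<le> N" "{a + d - R..a + d + R} \<subseteq> per (p N) u"
    using eventually_conj[OF eventually_ge_at_top[of "max n n0"]
        eventually_subset_per[OF finite_atLeastAtMost_int]]
    unfolding eventually_sequentially by (metis max.bounded_iff order_refl)
  obtain z where z: "int (p N) dvd d - k * int z"
    using nonneg_solution_if_gcd_dvd[OF _ dvd[OF N(2)]] p_pos by auto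
  define y where "y = shift_by (k * int z) (shift_by a u)"
  have "int (p N) dvd (k * int z + a) - (a + d)"
    using z by (simp add: dvd_diff_commute algebra_simps)
  then have "agree_within R (shift_by (a + d) u) y"
    unfolding y_def shift_by_shift_by by (rule agree_within_shift_by_per[OF N(3)])
  then have "agree_within L (F y) (F (shift_by (a + d) u))"
    using R agree_within_commute by (metis y_def shift_by_mem_orbit_closure shift_by_shift_by)
  moreover have "has_phase n (F y) (r + k * int z)"
    unfolding y_def commutes_mult[OF shift_by_mem_orbit_closure] by (rule has_phase_shift_by[OF r])
  ultimately obtain t where t: "int (p n) dvd t - (r + k * int z)"
      "agree_within L (shift_by t u) (F (shift_by (a + d) u))"
    using has_phase_agree_within by metis
  have "int (p n) dvd (t - (r + k * int z)) - (d - k * int z)"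
    using t(1) dvd_trans[OF p_dvd[OF N(1)] z] by (rule dvd_diff)
  then have "int (p n) dvd t - (r + d)"
    by (simp add: algebra_simps)
  then show "\<exists>t. int (p n) dvd t - (r + d) \<and> agree_within L (shift_by t u) (F (shift_by (a + d) u))"
    using t(2) by blast
qed

lemma has_phase_image:
  assumes dvd: "\<And>N. n0 \<le> N \<Longrightarrow> gcd k (int (p N)) dvd int (p n)"
    and x: "x \<in> X" and r: "has_phase n x r" and \<rho>: "has_phase n (F (shift_by r u)) \<rho>"
  shows "has_phase n (F x) \<rho>"
  unfolding has_phase_def
proof
  fix L
  obtain R where R: "\<And>y. y \<in> X \<Longrightarrow> agree_within R x y \<Longrightarrow> agree_within L (F x) (F y)"
    using continuous_map_agree_within[OF continuous x] by auto
  obtain t where t: "int (p n) dvd t - r" "agree_within R (shift_by t u) x"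
    using r unfolding has_phase_def by blast
  have "agree_within L (F (shift_by t u)) (F x)"
    using R[of "shift_by t u"] t(2) agree_within_commute by auto
  moreover have "has_phase n (F (shift_by (r + (t - r)) u)) (\<rho> + (t - r))"
    using dvd_trans[OF dvd t(1)] by (rule has_phase_image_orbit[OF _ \<rho>])
  then have "has_phase n (F (shift_by t u)) (\<rho> + (t - r))"
    by simp
  then have "has_phase n (F (shift_by t u)) \<rho>"
    by (rule has_phase_cong) (simp add: t(1) dvd_diff_commute [of _ r t])
  ultimately show "\<exists>t. int (p n) dvd t - \<rho> \<and> agree_within L (shift_by t u) (F x)"
    using has_phase_agree_within by metis
qed

lemma same_phases_image:
  assumes "x \<in> X" "y \<in> X" "same_phases x y"
  shows "same_phases (F x) (F y)"
  unfolding same_phases_def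
proof
  fix n
  obtain n0 where n0: "\<And>N. n0 \<le> N \<Longrightarrow> gcd k (int (p N)) dvd int (p n0)"
    using gcd_eventually_dvd_period[OF k_pos] by blast
  define m where "m = max n n0"
  have dvd: "gcd k (int (p N)) dvd int (p m)" if "n0 \<le> N" for N
    using n0[OF that] p_dvd[of n0 m] by (simp add: m_def dvd_trans)
  obtain r where r: "has_phase m x r" "has_phase m y r"
    using assms(3) unfolding same_phases_def by blast
  obtain \<rho> where "has_phase m (F (shift_by r u)) \<rho>"
    using has_phase_exists[OF maps_orbit_closure[OF shift_by_mem_orbit_closure]] by blast
  then have "has_phase m (F x) \<rho>" "has_phase m (F y) \<rho>"
    using has_phase_image[OF dvd] assms r by blast+
  then show "\<exists>\<rho>. has_phase n (F x) \<rho> \<and> has_phase n (F y) \<rho>"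
    using has_phase_mono[of m _ _ n] by (auto simp: m_def)
qed

lemma same_phases_image_orbit:
  assumes "\<And>N. n0 \<le> N \<Longrightarrow> gcd k (int (p N)) dvd d"
  shows "same_phases (F (shift_by (a + d) u)) (shift_by d (F (shift_by a u)))"
  unfolding same_phases_def
proof
  fix n
  obtain r where "has_phase n (F (shift_by a u)) r"
    using has_phase_exists[OF maps_orbit_closure[OF shift_by_mem_orbit_closure]] by blast
  then show "\<exists>r. has_phase n (F (shift_by (a + d) u)) r \<and> has_phase n (shift_by d (F (shift_by a u))) r"
    using has_phase_image_orbit[OF assms] has_phase_shift_by by blast
qed

end

context toeplitz_with_periods
begin

lemma Aut_funpow_shift_imp_Aut_period:
  assumes "0 < k" and f: "f \<in> Aut X (shift ^^ k)"
  shows "\<exists>n. f \<in> Aut X (shift ^^ p n)"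
proof -
  let ?T = "subtopology fullshift_top X"
  obtain g where "homeomorphic_maps ?T ?T f g"
    using f by (auto simp: Aut_def homeomorphic_map_maps)
  then have cont: "continuous_map ?T fullshift_top f" "continuous_map ?T fullshift_top g"
    and maps: "\<And>x. x \<in> X \<Longrightarrow> f x \<in> X" "\<And>x. x \<in> X \<Longrightarrow> g x \<in> X"
    and inv: "\<And>x. x \<in> X \<Longrightarrow> g (f x) = x" "\<And>x. x \<in> X \<Longrightarrow> f (g x) = x"
    by (auto simp: homeomorphic_maps_def continuous_map_in_subtopology)
  have f_comm: "f (shift_by (int k) x) = shift_by (int k) (f x)" if "x \<in> X" for x
    using f that by (simp add: Aut_def funpow_shift)
  have g_comm: "g (shift_by (int k) x) = shift_by (int k) (g x)" if "x \<in> X" for x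
    using f_comm[OF maps(2)] inv maps shift_by_mem_orbit_closureI that by metis
  interpret F: shift_power_commuting u p f "int k"
    using assms(1) cont(1) maps(1) f_comm
    by unfold_locales auto
  interpret G: shift_power_commuting u p g "int k"
    using assms(1) cont(2) maps(2) g_comm
    by unfold_locales auto
  obtain n0 where n0: "\<And>N. n0 \<le> N \<Longrightarrow> gcd (int k) (int (p N)) dvd int (p n0)"
    using gcd_eventually_dvd_period assms(1) by (metis of_nat_0_less_iff)
  let ?P = "int (p n0)"
  have orbit: "f (shift_by (?P + t) u) = shift_by ?P (f (shift_by t u))" for t
  proof -
    \<comment> \<open>Phases only identify orbit points, so compare after applying the inverse g.\<close>
    have "same_phases (g (f (shift_by (t + ?P) u))) (g (shift_by ?P (f (shift_by t u))))"
      using F.same_phases_image_orbit[of n0 ?P t, OF n0]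
      by (intro G.same_phases_image) (simp_all add: maps shift_by_mem_orbit_closureI)
    then have "g (shift_by ?P (f (shift_by t u))) = shift_by (t + ?P) u"
      using inv(1) by (intro same_phases_orbit_eq) simp
    then show ?thesis
      using inv(2) maps shift_by_mem_orbit_closureI by (metis add.commute shift_by_mem_orbit_closure)
  qed
  have "f (shift_by ?P x) = shift_by ?P (f x)" if "x \<in> X" for x
    using commutes_shift_by_on_orbit_closure[OF cont(1) orbit that] .
  then have "f \<in> Aut X (shift ^^ p n0)"
    using f by (simp add: Aut_def funpow_shift)
  then show ?thesis
    by blast
qed

end

theorem theorem4p3:
  fixes u :: "int \<Rightarrow> 'a::finite" and p :: "nat \<Rightarrow> nat"
  assumes "toeplitz u" and "\<not> periodic_seq u"
    and "period_structure p u"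
  shows "Aut_infty (orbit_closure u) shift
           = Aut (orbit_closure u) shift \<union> (\<Union>n. Aut (orbit_closure u) (shift ^^ p n))"
proof -
  interpret toeplitz_with_periods u p
    by unfold_locales (fact assms(3))
  have "Aut X (shift ^^ k) \<subseteq> Aut X shift \<union> (\<Union>n. Aut X (shift ^^ p n))" if "1 \<le> k" for k
    using Aut_funpow_shift_imp_Aut_period[of k] that by auto
  moreover have "Aut X shift \<subseteq> Aut_infty X shift"
    using UN_upper[of 1 "{1..}" "\<lambda>n. Aut X (shift ^^ n)"] unfolding Aut_infty_def by simp
  moreover have "Aut X (shift ^^ p n) \<subseteq> Aut_infty X shift" for n
    using p_pos[of n] unfolding Aut_infty_def by (auto simp: Suc_le_eq)
  ultimately show ?thesis
    unfolding Aut_infty_def by blast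
qed

end
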